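(* Let $n\ge 3$ and let ${\bf a},{\bf b},{\bf c}$ be sequences of positive integers each with sum at most $n$. If $\mathcal T_{{\bf a},{\bf b},{\bf c}}$ has finitely many $G$-orbits, then one of ${\bf a},{\bf b},{\bf c}$ equals $(1)$ or $(n)$.
   Context: $\mathbb F$ is an infinite field of characteristic $\ne 2$. Equip $\mathbb F^{2n}$ (canonical basis $e_1,\ldots,e_{2n}$) with the symmetric bilinear form $(e_i,e_j)=\delta_{i,2n+1-j}$, and let $G={\rm O}_{2n}(\mathbb F)$ be its isometry group. A subspace $V$ is isotropic if $(V,V)=\{0\}$. For a sequence ${\bf a}=(\alpha_1,\ldots,\alpha_p)$ of positive integers with $\sum\alpha_j\le n$, $M_{\bf a}$ is the set of flags $V_1\subset\cdots\subset V_p$ in $\mathbb F^{2n}$ with $\dim V_j=\alpha_1+\cdots+\alpha_j$ and $V_p$ isotropic. $\mathcal T_{{\bf a},{\bf b},{\bf c}}=M_{\bf a}\times M_{\bf b}\times M_{\bf c}$ with the diagonal $G$-action. *)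

theory Defs
  imports Main
begin

text \<open>Vectors of F^(2n) are functions nat => F vanishing at indices >= 2n
  (index i stands for the basis vector e_(i+1)).\<close>

definition vecs :: "nat \<Rightarrow> (nat \<Rightarrow> 'a::field) set" where
  "vecs n = {v. \<forall>i\<ge>2*n. v i = 0}"

definition vadd :: "(nat \<Rightarrow> 'a::field) \<Rightarrow> (nat \<Rightarrow> 'a) \<Rightarrow> nat \<Rightarrow> 'a" where
  "vadd u v = (\<lambda>i. u i + v i)"

definition vscale :: "'a::field \<Rightarrow> (nat \<Rightarrow> 'a) \<Rightarrow> nat \<Rightarrow> 'a" where
  "vscale c v = (\<lambda>i. c * v i)"

text \<open>The symmetric bilinear form (e_i, e_j) = delta_(i, 2n+1-j) (1-based), i.e.
  indices i, j (0-based) pair iff i + j = 2n - 1.\<close>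
definition bform :: "nat \<Rightarrow> (nat \<Rightarrow> 'a::field) \<Rightarrow> (nat \<Rightarrow> 'a) \<Rightarrow> 'a" where
  "bform n u v = (\<Sum>i<2*n. u i * v (2*n - 1 - i))"

definition is_subspace :: "nat \<Rightarrow> (nat \<Rightarrow> 'a::field) set \<Rightarrow> bool" where
  "is_subspace n V \<longleftrightarrow> V \<subseteq> vecs n \<and> (\<lambda>i. 0) \<in> V \<and>
     (\<forall>u\<in>V. \<forall>v\<in>V. vadd u v \<in> V) \<and> (\<forall>c. \<forall>v\<in>V. vscale c v \<in> V)"

definition lincomb :: "(nat \<Rightarrow> 'a::field) \<Rightarrow> (nat \<Rightarrow> 'a) list \<Rightarrow> nat \<Rightarrow> 'a" where
  "lincomb c bs = (\<lambda>k. \<Sum>i<length bs. c i * (bs ! i) k)"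

definition lin_indep :: "(nat \<Rightarrow> 'a::field) list \<Rightarrow> bool" where
  "lin_indep bs \<longleftrightarrow> (\<forall>c. lincomb c bs = (\<lambda>k. 0) \<longrightarrow> (\<forall>i<length bs. c i = 0))"

definition lspan :: "(nat \<Rightarrow> 'a::field) list \<Rightarrow> (nat \<Rightarrow> 'a) set" where
  "lspan bs = {lincomb c bs | c. True}"

definition has_dim :: "(nat \<Rightarrow> 'a::field) set \<Rightarrow> nat \<Rightarrow> bool" where
  "has_dim V d \<longleftrightarrow> (\<exists>bs. length bs = d \<and> lin_indep bs \<and> lspan bs = V)"

definition isotropic :: "nat \<Rightarrow> (nat \<Rightarrow> 'a::field) set \<Rightarrow> bool" where
  "isotropic n V \<longleftrightarrow> (\<forall>u\<in>V. \<forall>v\<in>V. bform n u v = 0)"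

definition orth_group :: "nat \<Rightarrow> ((nat \<Rightarrow> 'a::field) \<Rightarrow> (nat \<Rightarrow> 'a)) set" where
  "orth_group n = {g. bij_betw g (vecs n) (vecs n) \<and>
     (\<forall>u\<in>vecs n. \<forall>v\<in>vecs n. g (vadd u v) = vadd (g u) (g v)) \<and>
     (\<forall>c. \<forall>v\<in>vecs n. g (vscale c v) = vscale c (g v)) \<and>
     (\<forall>u\<in>vecs n. \<forall>v\<in>vecs n. bform n (g u) (g v) = bform n u v)}"

definition flags :: "nat \<Rightarrow> nat list \<Rightarrow> (nat \<Rightarrow> 'a::field) set list set" where
  "flags n a = {Vs. length Vs = length a \<and>
     (\<forall>j<length a. is_subspace n (Vs ! j) \<and> has_dim (Vs ! j) (sum_list (take (Suc j) a))) \<and>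
     (\<forall>j. Suc j < length a \<longrightarrow> Vs ! j \<subseteq> Vs ! Suc j) \<and>
     (Vs \<noteq> [] \<longrightarrow> isotropic n (last Vs))}"

definition triple_space :: "nat \<Rightarrow> nat list \<Rightarrow> nat list \<Rightarrow> nat list \<Rightarrow>
    ((nat \<Rightarrow> 'a::field) set list \<times> (nat \<Rightarrow> 'a) set list \<times> (nat \<Rightarrow> 'a) set list) set" where
  "triple_space n a b c = flags n a \<times> flags n b \<times> flags n c"

definition act_flag :: "((nat \<Rightarrow> 'a) \<Rightarrow> (nat \<Rightarrow> 'a)) \<Rightarrow> (nat \<Rightarrow> 'a) set list \<Rightarrow> (nat \<Rightarrow> 'a) set list" where
  "act_flag g Vs = map (\<lambda>V. g ` V) Vs"

definition triple_orbit :: "nat \<Rightarrow> (nat \<Rightarrow> 'a::field) set list \<times> (nat \<Rightarrow> 'a) set list \<times> (nat \<Rightarrow> 'a) set list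
    \<Rightarrow> ((nat \<Rightarrow> 'a) set list \<times> (nat \<Rightarrow> 'a) set list \<times> (nat \<Rightarrow> 'a) set list) set" where
  "triple_orbit n t = (case t of (X, Y, Z) \<Rightarrow>
     {(act_flag g X, act_flag g Y, act_flag g Z) | g. g \<in> orth_group n})"

definition finitely_many_orbits :: "'a::field itself \<Rightarrow> nat \<Rightarrow> nat list \<Rightarrow> nat list \<Rightarrow> nat list \<Rightarrow> bool" where
  "finitely_many_orbits (TYPE('a)) n a b c \<longleftrightarrow>
     finite ((triple_orbit n :: _ \<Rightarrow> ((nat \<Rightarrow> 'a) set list \<times> _) set) ` triple_space n a b c)"

definition admissible_seq :: "nat \<Rightarrow> nat list \<Rightarrow> bool" where
  "admissible_seq n a \<longleftrightarrow> a \<noteq> [] \<and> (\<forall>x\<in>set a. 0 < x) \<and> sum_list a \<le> n"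

end

theory Submission
  imports Defs
begin

text \<open>For \<open>l \<noteq> 0\<close> consider the triple of flags of types \<open>a, b, c\<close> spanned by three
  isotropic frames beginning with \<open>e\<^sub>0 + l e\<^sub>1, f\<^sub>2\<close>, with \<open>e\<^sub>0 + e\<^sub>2, f\<^sub>1\<close> and with
  \<open>e\<^sub>1 + e\<^sub>2, f\<^sub>0\<close>, where \<open>f\<^sub>i\<close> is the partner of the unit vector \<open>e\<^sub>i\<close>. Since no type is
  \<open>(1)\<close> or \<open>(n)\<close>, each flag contains a subspace of dimension between \<open>2\<close> and \<open>n - 1\<close>, or
  both the first line and the whole Lagrangian. An isometry carrying the triple for \<open>l\<close> to
  the triple for \<open>m\<close> therefore preserves enough coordinates that the pairings between the
  images of the first two frame vectors force \<open>l = m\<close> or \<open>l m = 1\<close>. So the triples lie in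
  infinitely many orbits.\<close>

lemma lspan_linear_relation:
  assumes "\<forall>w\<in>set L. \<alpha> * w i = \<beta> * w j" and "v \<in> lspan L"
  shows "\<alpha> * v i = \<beta> * (v j :: 'a::field)"
proof -
  obtain c where v: "v = lincomb c L" using assms(2) by (auto simp: lspan_def)
  have "\<alpha> * v i = (\<Sum>m<length L. c m * (\<alpha> * (L ! m) i))"
    by (simp add: v lincomb_def sum_distrib_left algebra_simps)
  also have "\<dots> = (\<Sum>m<length L. c m * (\<beta> * (L ! m) j))"
    using assms(1) by (intro sum.cong) auto
  also have "\<dots> = \<beta> * v j"
    by (simp add: v lincomb_def sum_distrib_left algebra_simps)
  finally show ?thesis .
qed

lemma lspan_base:
  assumes "w \<in> set L"
  shows "w \<in> lspan L"
proof -
  obtain i where i: "i < length L" "L ! i = w" using assms by (auto simp: in_set_conv_nth)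
  have "lincomb (\<lambda>j. if j = i then 1 else 0) L k = w k" for k
  proof -
    have "lincomb (\<lambda>j. if j = i then 1 else 0) L k = (\<Sum>j<length L. if j = i then (L ! j) k else 0)"
      unfolding lincomb_def by (intro sum.cong) auto
    also have "\<dots> = w k" using i by simp
    finally show ?thesis .
  qed
  then have "lincomb (\<lambda>j. if j = i then 1 else 0) L = w" ..
  then show ?thesis unfolding lspan_def by blast
qed

lemma lspan_singleton: "v \<in> lspan [w] \<longleftrightarrow> (\<exists>c. v = (\<lambda>k. c * w k))"
  by (auto simp: lspan_def lincomb_def)

lemma lspan_vadd:
  assumes "u \<in> lspan L" and "v \<in> lspan L"
  shows "vadd u v \<in> lspan L"
proof -
  obtain c d where "u = lincomb c L" "v = lincomb d L" using assms by (auto simp: lspan_def)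
  then have "vadd u v = lincomb (\<lambda>i. c i + d i) L"
    by (auto simp: vadd_def lincomb_def algebra_simps sum.distrib)
  then show ?thesis by (auto simp: lspan_def)
qed

lemma lspan_vscale:
  assumes "v \<in> lspan L"
  shows "vscale a v \<in> lspan L"
proof -
  obtain d where "v = lincomb d L" using assms by (auto simp: lspan_def)
  then have "vscale a v = lincomb (\<lambda>i. a * d i) L"
    by (auto simp: vscale_def lincomb_def algebra_simps sum_distrib_left)
  then show ?thesis by (auto simp: lspan_def)
qed

lemma lspan_subset_vecs:
  assumes "set L \<subseteq> vecs n"
  shows "lspan L \<subseteq> vecs n"
proof
  fix v assume v: "v \<in> lspan L"
  have "1 * v i = 0 * v 0" if "2 * n \<le> i" for i
    by (rule lspan_linear_relation[OF _ v]) (use assms that in \<open>auto simp: vecs_def\<close>)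
  then show "v \<in> vecs n" unfolding vecs_def by simp
qed

lemma is_subspace_lspan:
  assumes "set L \<subseteq> vecs n"
  shows "is_subspace n (lspan L)"
proof -
  have "(\<lambda>i. 0) = lincomb (\<lambda>i. 0) L" by (simp add: lincomb_def)
  then have "(\<lambda>i. 0) \<in> lspan L" by (auto simp: lspan_def)
  then show ?thesis
    using lspan_subset_vecs[OF assms] lspan_vadd lspan_vscale unfolding is_subspace_def by blast
qed

lemma bform_commute: "bform n u v = bform n v (u :: nat \<Rightarrow> 'a::field)"
proof -
  have "bform n u v = (\<Sum>i<2*n. u (2*n-1-i) * v (2*n-1-(2*n-1-i)))"
    unfolding bform_def
    by (rule sum.reindex_bij_witness[where i="\<lambda>i. 2*n-1-i" and j="\<lambda>i. 2*n-1-i"]) auto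
  also have "\<dots> = bform n v u"
    unfolding bform_def by (intro sum.cong) (auto simp: mult.commute)
  finally show ?thesis .
qed

lemma bform_lincomb_left: "bform n (lincomb c L) w = (\<Sum>i<length L. c i * bform n (L ! i) w)"
  unfolding bform_def lincomb_def
  by (simp add: sum_distrib_left sum_distrib_right algebra_simps) (rule sum.swap)

lemma bform_lincomb_right: "bform n w (lincomb c L) = (\<Sum>i<length L. c i * bform n w (L ! i))"
  using bform_lincomb_left[of n c L w] by (simp add: bform_commute)

lemma isotropic_lspan:
  assumes "\<forall>u\<in>set L. \<forall>v\<in>set L. bform n u v = 0"
  shows "isotropic n (lspan L)"
  unfolding isotropic_def lspan_def
  using assms by (auto simp: bform_lincomb_left bform_lincomb_right nth_mem intro!: sum.neutral)

lemma lincomb_take: "lincomb c (take s L) = lincomb (\<lambda>i. if i < s then c i else 0) L"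
proof
  fix k
  have "lincomb (\<lambda>i. if i < s then c i else 0) L k
      = (\<Sum>i\<in>{..<length L} \<inter> {i. i < s}. c i * (L ! i) k)"
    unfolding lincomb_def by (simp add: sum.inter_restrict) (intro sum.cong, auto)
  also have "{..<length L} \<inter> {i. i < s} = {..<length (take s L)}" by auto
  finally show "lincomb c (take s L) k = lincomb (\<lambda>i. if i < s then c i else 0) L k"
    unfolding lincomb_def by simp
qed

lemma lin_indep_take:
  assumes "lin_indep L"
  shows "lin_indep (take s L)"
  unfolding lin_indep_def
proof (intro allI impI)
  fix c i assume "lincomb c (take s L) = (\<lambda>k. 0)" and i: "i < length (take s L)"
  then have "\<forall>j<length L. (if j < s then c j else 0) = 0"
    using assms unfolding lin_indep_def lincomb_take by blast
  then show "c i = 0" using i by auto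
qed

lemma lspan_take_mono:
  assumes "s \<le> s'"
  shows "lspan (take s L) \<subseteq> lspan (take s' L)"
proof
  fix v assume "v \<in> lspan (take s L)"
  then obtain c where v: "v = lincomb c (take s L)" by (auto simp: lspan_def)
  have "v = lincomb (\<lambda>i. if i < s then c i else 0) (take s' L)"
    unfolding v lincomb_take using assms by (intro arg_cong2[where f=lincomb]) auto
  then show "v \<in> lspan (take s' L)" by (auto simp: lspan_def)
qed

lemma lspan_take_subset_vecs: "set L \<subseteq> vecs n \<Longrightarrow> lspan (take s L) \<subseteq> vecs n"
  by (meson lspan_subset_vecs order_trans set_take_subset)

lemma lin_indep_triangular:
  assumes "\<forall>i<length L. (L ! i) (piv i) \<noteq> (0::'a::field)"
    and "\<forall>i<length L. \<forall>j<length L. i < j \<longrightarrow> (L ! j) (piv i) = 0"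
  shows "lin_indep L"
  unfolding lin_indep_def
proof (intro allI impI)
  fix c i assume z: "lincomb c L = (\<lambda>k. 0)" and "i < length L"
  then show "c i = 0"
  proof (induction i rule: less_induct)
    case (less i)
    have "0 = (\<Sum>j<length L. c j * (L ! j) (piv i))"
      using fun_cong[OF z, of "piv i"] by (simp add: lincomb_def)
    also have "\<dots> = (\<Sum>j\<in>{i}. c j * (L ! j) (piv i))"
    proof (rule sum.mono_neutral_right)
      show "\<forall>j\<in>{..<length L} - {i}. c j * (L ! j) (piv i) = 0"
      proof
        fix j assume j: "j \<in> {..<length L} - {i}"
        show "c j * (L ! j) (piv i) = 0"
          using less assms(2) j by (cases "j < i") auto
      qed
    qed (use less in auto)
    finally show ?case using assms(1) less by simp
  qed
qed

section \<open>Flags spanned by a frame\<close>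

definition flag_of_basis :: "(nat \<Rightarrow> 'a::field) list \<Rightarrow> nat list \<Rightarrow> (nat \<Rightarrow> 'a) set list" where
  "flag_of_basis F a = map (\<lambda>j. lspan (take (sum_list (take (Suc j) a)) F)) [0..<length a]"

lemma sum_list_take_le: "sum_list (take k a) \<le> sum_list (a :: nat list)"
  by (metis append_take_drop_id le_add1 sum_list_append)

lemma flag_of_basis_in_flags:
  assumes F: "set F \<subseteq> vecs n" "lin_indep F" "\<forall>u\<in>set F. \<forall>v\<in>set F. bform n u v = 0"
    and a: "a \<noteq> []" "sum_list a \<le> length F"
  shows "flag_of_basis F a \<in> flags n a"
proof -
  have sub: "set (take s F) \<subseteq> vecs n" for s using F(1) by (meson order_trans set_take_subset)
  have dim: "has_dim (lspan (take (sum_list (take (Suc j) a)) F)) (sum_list (take (Suc j) a))" for j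
    unfolding has_dim_def using sum_list_take_le[of "Suc j" a] a(2) F(2) lin_indep_take
    by (intro exI[of _ "take (sum_list (take (Suc j) a)) F"]) auto
  have mono: "lspan (take (sum_list (take (Suc j) a)) F) \<subseteq> lspan (take (sum_list (take (Suc (Suc j)) a)) F)"
    if "Suc j < length a" for j
    using that by (intro lspan_take_mono) (simp add: take_Suc_conv_app_nth)
  have iso: "isotropic n (lspan (take s F))" for s
    by (rule isotropic_lspan) (use F(3) in \<open>meson in_set_takeD\<close>)
  show ?thesis unfolding flags_def flag_of_basis_def
    using dim mono iso is_subspace_lspan[OF sub] a(1) by (auto simp: last_map)
qed

lemma act_flag_of_basis:
  assumes "act_flag g (flag_of_basis F a) = flag_of_basis F' a" and "j < length a"
  shows "g ` lspan (take (sum_list (take (Suc j) a)) F) = lspan (take (sum_list (take (Suc j) a)) F')"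
proof -
  have "map (\<lambda>j. g ` lspan (take (sum_list (take (Suc j) a)) F)) [0..<length a]
      = map (\<lambda>j. lspan (take (sum_list (take (Suc j) a)) F')) [0..<length a]"
    using assms(1) by (simp add: act_flag_def flag_of_basis_def comp_def)
  then show ?thesis using assms(2) by (simp add: map_eq_conv)
qed

lemma admissible_seq_cases:
  assumes a: "admissible_seq n a" and "a \<noteq> [1]" and "a \<noteq> [n]"
  shows "(\<exists>j<length a. 2 \<le> sum_list (take (Suc j) a) \<and> sum_list (take (Suc j) a) \<le> n - 1)
    \<or> a = [1, n - 1]"
proof -
  obtain x r where ar: "a = x # r" using a by (cases a) (auto simp: admissible_seq_def)
  have x: "0 < x" "x + sum_list r \<le> n" "\<forall>y\<in>set r. 0 < y"
    using a ar by (auto simp: admissible_seq_def)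
  have r_Nil: "r' = []" if "sum_list r' = (0::nat)" "\<forall>y\<in>set r'. 0 < y" for r'
    using that by (cases r') auto
  consider "2 \<le> x" "x \<le> n - 1" | "x = n" | "x = 1" using x by linarith
  then show ?thesis
  proof cases
    case 1
    then show ?thesis using ar by force
  next
    case 2
    then show ?thesis using r_Nil[of r] x ar assms by simp
  next
    case 3
    then obtain y r' where r: "r = y # r'" using ar assms by (cases r) auto
    show ?thesis
    proof (cases "1 + y \<le> n - 1")
      case True
      then show ?thesis using x r ar 3 by (intro disjI1 exI[of _ 1]) auto
    next
      case False
      have "1 + y + sum_list r' \<le> n" using x(2) 3 r by simp
      then have "y = n - 1" and r'_sum: "sum_list r' = 0" using False by linarith+
      moreover have "r' = []" using r_Nil[OF r'_sum] x(3) r by simp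
      ultimately show ?thesis using ar r 3 by simp
    qed
  qed
qed

definition moves_mid_span ::
    "nat \<Rightarrow> ((nat \<Rightarrow> 'a) \<Rightarrow> (nat \<Rightarrow> 'a)) \<Rightarrow> (nat \<Rightarrow> 'a::field) list \<Rightarrow> (nat \<Rightarrow> 'a) list \<Rightarrow> bool" where
  "moves_mid_span n g F F' \<longleftrightarrow> (\<exists>s. 2 \<le> s \<and> s \<le> n - 1 \<and> g ` lspan (take s F) = lspan (take s F'))"

definition moves_line_lagrangian ::
    "nat \<Rightarrow> ((nat \<Rightarrow> 'a) \<Rightarrow> (nat \<Rightarrow> 'a)) \<Rightarrow> (nat \<Rightarrow> 'a::field) list \<Rightarrow> (nat \<Rightarrow> 'a) list \<Rightarrow> bool" where
  "moves_line_lagrangian n g F F' \<longleftrightarrow>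
     g ` lspan (take 1 F) = lspan (take 1 F') \<and> g ` lspan (take n F) = lspan (take n F')"

text \<open>What a group element carrying the flag of a type other than \<open>(1)\<close>, \<open>(n)\<close> built from
  \<open>F\<close> to the one built from \<open>F'\<close> retains: a prefix span of intermediate dimension or, for the
  type \<open>(1, n - 1)\<close>, the first line and the whole Lagrangian.\<close>
definition moves_frame_flag ::
    "nat \<Rightarrow> ((nat \<Rightarrow> 'a) \<Rightarrow> (nat \<Rightarrow> 'a)) \<Rightarrow> (nat \<Rightarrow> 'a::field) list \<Rightarrow> (nat \<Rightarrow> 'a) list \<Rightarrow> bool" where
  "moves_frame_flag n g F F' \<longleftrightarrow> moves_mid_span n g F F' \<or> moves_line_lagrangian n g F F'"

lemma moves_frame_flag_if_act_flag:
  assumes "admissible_seq n a" "a \<noteq> [1]" "a \<noteq> [n]" and n: "n \<ge> 3"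
    and moves: "act_flag g (flag_of_basis F a) = flag_of_basis F' a"
  shows "moves_frame_flag n g F F'"
  using admissible_seq_cases[OF assms(1-3)]
proof
  assume "\<exists>j<length a. 2 \<le> sum_list (take (Suc j) a) \<and> sum_list (take (Suc j) a) \<le> n - 1"
  then have "moves_mid_span n g F F'"
    unfolding moves_mid_span_def using act_flag_of_basis[OF moves] by blast
  then show ?thesis unfolding moves_frame_flag_def ..
next
  assume "a = [1, n - 1]"
  then have "moves_line_lagrangian n g F F'"
    unfolding moves_line_lagrangian_def
    using act_flag_of_basis[OF moves, of 0] act_flag_of_basis[OF moves, of 1] n by simp
  then show ?thesis unfolding moves_frame_flag_def ..
qed

lemma moves_frame_flag_plane:
  assumes "moves_frame_flag n g F F'" and "n \<ge> 3"
  obtains s where "g ` lspan (take s F) = lspan (take s F')" "2 \<le> s"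
  using assms(1) unfolding moves_frame_flag_def moves_mid_span_def moves_line_lagrangian_def
proof (elim disjE exE conjE)
  fix s assume "2 \<le> s" "g ` lspan (take s F) = lspan (take s F')"
  then show thesis using that by blast
next
  assume "g ` lspan (take n F) = lspan (take n F')"
  then show thesis using that[of n] assms(2) by simp
qed

lemma moves_frame_flag_line:
  assumes "moves_frame_flag n g F F'" and "n \<ge> 3" and "x \<in> lspan (take 1 F)"
  obtains s where "s \<le> n - 1" "g x \<in> lspan (take s F')"
  using assms(1) unfolding moves_frame_flag_def moves_mid_span_def moves_line_lagrangian_def
proof (elim disjE exE conjE)
  fix s assume "2 \<le> s" "s \<le> n - 1" "g ` lspan (take s F) = lspan (take s F')"
  moreover have "x \<in> lspan (take s F)" using lspan_take_mono[of 1 s F] \<open>2 \<le> s\<close> assms(3) by auto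
  ultimately show thesis using that by blast
next
  assume "g ` lspan (take 1 F) = lspan (take 1 F')"
  then have "g x \<in> lspan (take 1 F')" using assms(3) by blast
  then show thesis using that[of 1] assms(2) by simp
qed

lemma vecs_vscale: "v \<in> vecs n \<Longrightarrow> vscale c v \<in> vecs n"
  by (simp add: vecs_def vscale_def)

lemma orth_group_bform:
  "g \<in> orth_group n \<Longrightarrow> u \<in> vecs n \<Longrightarrow> v \<in> vecs n \<Longrightarrow> bform n (g u) (g v) = bform n u v"
  unfolding orth_group_def by auto

lemma orth_group_linear:
  assumes g: "g \<in> orth_group n" and "u \<in> vecs n" "v \<in> vecs n"
  shows "g (\<lambda>i. a * u i + b * v i) = (\<lambda>i. a * g u i + b * g v i)"
proof -
  have "g (\<lambda>i. a * u i + b * v i) = g (vadd (vscale a u) (vscale b v))"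
    by (simp add: vadd_def vscale_def)
  also have "\<dots> = vadd (g (vscale a u)) (g (vscale b v))"
    using g assms(2,3) vecs_vscale unfolding orth_group_def by blast
  also have "\<dots> = vadd (vscale a (g u)) (vscale b (g v))"
    using g assms(2,3) unfolding orth_group_def by simp
  finally show ?thesis by (simp add: vadd_def vscale_def)
qed

lemma orth_group_relation:
  assumes g: "g \<in> orth_group n" and "u \<in> vecs n" "u' \<in> vecs n" "v \<in> vecs n" "v' \<in> vecs n"
    and "(\<lambda>i. a * u i + a' * u' i) = (\<lambda>i. b * v i + b' * v' i)"
  shows "a * g u k + a' * g u' k = b * g v k + b' * g v' k"
proof -
  have "g (\<lambda>i. a * u i + a' * u' i) = g (\<lambda>i. b * v i + b' * v' i)" using assms(6) by simp
  then have "(\<lambda>i. a * g u i + a' * g u' i) = (\<lambda>i. b * g v i + b' * g v' i)"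
    unfolding orth_group_linear[OF g assms(2,3)] orth_group_linear[OF g assms(4,5)] .
  from fun_cong[OF this, of k] show ?thesis by simp
qed

lemma orth_group_nonzero:
  assumes g: "g \<in> orth_group n" and "v \<in> vecs n" "v \<noteq> (\<lambda>i. 0)"
  shows "g v \<noteq> (\<lambda>i. (0::'a::field))"
proof
  assume gv: "g v = (\<lambda>i. 0)"
  have "(\<lambda>i. (0::'a)) \<in> vecs n" by (simp add: vecs_def)
  moreover have "g (\<lambda>i. 0) = (\<lambda>i. 0)"
    using orth_group_linear[OF g assms(2,2), of 0 0] gv by simp
  moreover have "inj_on g (vecs n)" using g by (simp add: orth_group_def bij_betw_def)
  ultimately show False using assms(2,3) gv by (metis inj_onD)
qed

lemma orth_group_maps_line:
  assumes g: "g \<in> orth_group n" and "g ` lspan [x] = lspan [y]"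
    and "x \<in> vecs n" "x \<noteq> (\<lambda>i. 0)"
  obtains k where "k \<noteq> 0" "g x = (\<lambda>i. k * y i)"
proof -
  have "g x \<in> lspan [y]" using assms(2) lspan_base[of x "[x]"] by auto
  then obtain k where k: "g x = (\<lambda>i. k * y i)" using lspan_singleton by blast
  moreover have "k \<noteq> 0" using orth_group_nonzero[OF g assms(3,4)] k by auto
  ultimately show thesis using that by blast
qed

lemma id_in_orth_group: "id \<in> orth_group n"
  by (simp add: orth_group_def bij_betw_def)

lemma triple_orbit_eqD:
  assumes "triple_orbit n (X, Y, Z) = triple_orbit n (X', Y', Z')"
  obtains g where "g \<in> orth_group n"
    "act_flag g X = X'" "act_flag g Y = Y'" "act_flag g Z = (Z' :: (nat \<Rightarrow> 'a::field) set list)"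
proof -
  have "(X', Y', Z') \<in> triple_orbit n (X', Y', Z')"
    unfolding triple_orbit_def using id_in_orth_group[of n]
    by (auto simp: act_flag_def intro!: exI[of _ id])
  then have "(X', Y', Z') \<in> triple_orbit n (X, Y, Z)" using assms by simp
  then show thesis using that unfolding triple_orbit_def by auto
qed

definition unit_vec :: "nat \<Rightarrow> nat \<Rightarrow> 'a::field" where
  "unit_vec k = (\<lambda>i. if i = k then 1 else 0)"

lemma unit_vec_vecs: "k < 2 * n \<Longrightarrow> unit_vec k \<in> vecs n"
  by (simp add: vecs_def unit_vec_def)

lemma bform_unit_vec_left:
  assumes "k < 2 * n"
  shows "bform n (unit_vec k) w = w (2 * n - 1 - k)"
proof -
  have "bform n (unit_vec k) w = (\<Sum>i<2*n. if i = k then w (2 * n - 1 - i) else 0)"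
    unfolding bform_def unit_vec_def by (intro sum.cong) auto
  then show ?thesis using assms by simp
qed

lemma bform_unit_vec_right: "k < 2 * n \<Longrightarrow> bform n w (unit_vec k) = w (2 * n - 1 - k)"
  using bform_unit_vec_left bform_commute by metis

text \<open>Orthogonality in coordinates: \<open>e\<^sub>j\<close> is orthogonal to the span (its partner coordinate
  \<open>j'\<close> vanishes there), hence \<open>g e\<^sub>j\<close> is orthogonal to every \<open>e\<^sub>k\<close> in the image span.\<close>
lemma orth_group_unit_vec_perp:
  assumes g: "g \<in> orth_group n" and F: "set F \<subseteq> vecs n"
    and jk: "j + j' + 1 = 2 * n" "k + k' + 1 = 2 * n"
    and "g ` lspan (take s F) = lspan (take s F')"
    and "\<forall>u\<in>lspan (take s F). u j' = 0"
    and "unit_vec k \<in> lspan (take s F')"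
  shows "g (unit_vec j) k' = 0"
proof -
  obtain u where u: "u \<in> lspan (take s F)" "unit_vec k = g u" using assms(5,7) by blast
  have "u \<in> vecs n" using u(1) lspan_take_subset_vecs[OF F] by blast
  have j: "j < 2 * n" "2 * n - 1 - j = j'" and k: "k < 2 * n" "2 * n - 1 - k = k'" using jk by auto
  have "g (unit_vec j) k' = bform n (g (unit_vec j)) (unit_vec k)"
    using bform_unit_vec_right[OF k(1), of "g (unit_vec j)"] unfolding k(2) ..
  also have "\<dots> = bform n (unit_vec j) u"
    using u(2) orth_group_bform[OF g unit_vec_vecs[OF j(1)] \<open>u \<in> vecs n\<close>] by simp
  also have "\<dots> = u j'"
    using bform_unit_vec_left[OF j(1), of u] unfolding j(2) .
  also have "\<dots> = 0" using assms(6) u(1) by simp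
  finally show ?thesis .
qed

text \<open>The coordinates \<open>n, \<dots>, 2n - 4\<close> are the partners of the middle coordinates
  \<open>3, \<dots>, n - 1\<close>. Vectors vanishing there pair with each other only through the six core
  coordinates \<open>0, 1, 2\<close> and their partners \<open>2n - 1, 2n - 2, 2n - 3\<close>.\<close>
definition mid_dual_free :: "nat \<Rightarrow> (nat \<Rightarrow> 'a::field) \<Rightarrow> bool" where
  "mid_dual_free n v \<longleftrightarrow> (\<forall>k. n \<le> k \<and> k \<le> 2 * n - 4 \<longrightarrow> v k = 0)"

lemma bform_mid_dual_free:
  assumes n: "n \<ge> 3" and "mid_dual_free n u" "mid_dual_free n v"
  shows "bform n u v = u 0 * v (2*n-1) + u 1 * v (2*n-2) + u 2 * v (2*n-3)
     + u (2*n-3) * v 2 + u (2*n-2) * v 1 + u (2*n-1) * v 0"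
proof -
  let ?f = "\<lambda>i. u i * v (2*n-1-i)"
  have "bform n u v = sum ?f {..<2*n}" by (simp add: bform_def)
  also have "\<dots> = sum ?f {0, 1, 2, 2*n-3, 2*n-2, 2*n-1}"
  proof (rule sum.mono_neutral_right)
    show "\<forall>i\<in>{..<2*n} - {0, 1, 2, 2*n-3, 2*n-2, 2*n-1}. ?f i = 0"
    proof
      fix i assume i: "i \<in> {..<2*n} - {0, 1, 2, 2*n-3, 2*n-2, 2*n-1}"
      show "?f i = 0"
      proof (cases "i < n")
        case True
        then have "n \<le> 2*n-1-i \<and> 2*n-1-i \<le> 2*n-4" using i n by auto
        then show ?thesis using assms(3) unfolding mid_dual_free_def by auto
      next
        case False
        then have "n \<le> i \<and> i \<le> 2*n-4" using i n by auto
        then show ?thesis using assms(2) unfolding mid_dual_free_def by auto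
      qed
    qed
  qed (use n in auto)
  also have "\<dots> = u 0 * v (2*n-1) + u 1 * v (2*n-2) + u 2 * v (2*n-3)
     + u (2*n-3) * v 2 + u (2*n-2) * v 1 + u (2*n-1) * v 0"
  proof -
    have sum6: "sum h {i1, i2, i3, i4, i5, i6} = h i1 + h i2 + h i3 + h i4 + h i5 + h i6"
      if "distinct [i1, i2, i3, i4, i5, i6]" for h :: "nat \<Rightarrow> 'a" and i1 i2 i3 i4 i5 i6
      using that by (simp add: add.assoc)
    have "distinct [0, 1, 2, 2*n-3, 2*n-2, 2*n-1 :: nat]" using n by auto
    note sum6[OF this, of ?f]
    moreover have "2*n-1-0 = 2*n-1" "2*n-1-1 = 2*n-2" "2*n-1-2 = 2*n-3" "2*n-1-(2*n-3) = 2"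
      "2*n-1-(2*n-2) = 1" "2*n-1-(2*n-1) = 0" using n by auto
    ultimately show ?thesis by (simp only:)
  qed
  finally show ?thesis .
qed

definition core_vec :: "nat \<Rightarrow> (nat \<Rightarrow> 'a::field) \<Rightarrow> bool" where
  "core_vec n v \<longleftrightarrow> (\<forall>k. v k \<noteq> 0 \<longrightarrow> k \<in> {0, 1, 2, 2*n-3, 2*n-2, 2*n-1})"

lemma core_vec_mid_dual_free: "n \<ge> 3 \<Longrightarrow> core_vec n v \<Longrightarrow> mid_dual_free n v"
  unfolding core_vec_def mid_dual_free_def by force

lemma core_vec_vecs: "n \<ge> 3 \<Longrightarrow> core_vec n v \<Longrightarrow> v \<in> vecs n"
  unfolding core_vec_def vecs_def by force

lemma core_vec_unit_vecs:
  "core_vec n (unit_vec 0)" "core_vec n (unit_vec 1)" "core_vec n (unit_vec 2)"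
  "core_vec n (unit_vec (2*n-3))" "core_vec n (unit_vec (2*n-2))" "core_vec n (unit_vec (2*n-1))"
  by (auto simp: core_vec_def unit_vec_def)

lemma bform_core_vec:
  "n \<ge> 3 \<Longrightarrow> core_vec n u \<Longrightarrow> core_vec n v \<Longrightarrow>
   bform n u v = u 0 * v (2*n-1) + u 1 * v (2*n-2) + u 2 * v (2*n-3)
     + u (2*n-3) * v 2 + u (2*n-2) * v 1 + u (2*n-1) * v 0"
  using bform_mid_dual_free core_vec_mid_dual_free by blast

section \<open>Lagrangian frames\<close>

definition lag_frame ::
    "nat \<Rightarrow> (nat \<Rightarrow> 'a::field) \<Rightarrow> (nat \<Rightarrow> 'a) \<Rightarrow> (nat \<Rightarrow> 'a) \<Rightarrow> (nat \<Rightarrow> 'a) list" where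
  "lag_frame n x q t = x # q # map unit_vec [3..<n] @ [t]"

lemma length_lag_frame: "n \<ge> 3 \<Longrightarrow> length (lag_frame n x q t) = n"
  by (simp add: lag_frame_def)

lemma take_lag_frame_before_last:
  assumes "n \<ge> 3"
  shows "take (n - 1) (lag_frame n x q t) = x # q # map unit_vec [3..<n]"
proof -
  have "n - 1 = Suc (Suc (length (map unit_vec [3..<n] :: (nat \<Rightarrow> 'a) list)))" using assms by simp
  then show ?thesis by (simp only: lag_frame_def take_Suc_Cons) simp
qed

lemma set_lag_frame: "set (lag_frame n x q t) = {x, q, t} \<union> unit_vec ` {3..<n}"
  by (auto simp: lag_frame_def)

lemma set_take_lag_frame:
  assumes "n \<ge> 3"
  shows "set (take s (lag_frame n x q t)) \<subseteq>
    (if s \<le> n - 1 then {x, q} else {x, q, t}) \<union> unit_vec ` {3..<n}"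
proof (cases "s \<le> n - 1")
  case True
  have "take s (lag_frame n x q t) = take s (take (n - 1) (lag_frame n x q t))"
    using True by (simp add: min_absorb1)
  then have "set (take s (lag_frame n x q t)) \<subseteq> set (x # q # map unit_vec [3..<n])"
    using take_lag_frame_before_last[OF assms] by (metis set_take_subset)
  then show ?thesis using True by auto
next
  case False
  then show ?thesis using set_take_subset[of s "lag_frame n x q t"] by (simp add: set_lag_frame)
qed

lemma take_1_lag_frame: "take 1 (lag_frame n x q t) = [x]"
  by (simp add: lag_frame_def)

lemma lag_frame_first: "1 \<le> s \<Longrightarrow> x \<in> lspan (take s (lag_frame n x q t))"
  by (rule lspan_base) (simp add: lag_frame_def take_Cons')

lemma lag_frame_second: "2 \<le> s \<Longrightarrow> q \<in> lspan (take s (lag_frame n x q t))"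
  by (rule lspan_base) (simp add: lag_frame_def take_Cons' numeral_eq_Suc)

lemma lag_frame_last:
  assumes "n \<ge> 3"
  shows "t \<in> lspan (take n (lag_frame n x q t))"
proof (rule lspan_base)
  have "take n (lag_frame n x q t) = lag_frame n x q t" using assms by (simp add: length_lag_frame)
  then show "t \<in> set (take n (lag_frame n x q t))" by (simp add: set_lag_frame)
qed

lemma lag_frame_nth:
  assumes "n \<ge> 3" "i < n"
  shows "lag_frame n x q t ! i =
    (if i = 0 then x else if i = 1 then q else if i < n - 1 then unit_vec (i + 1) else t)"
proof -
  consider "i = 0" | "i = 1" | "i \<ge> 2" by linarith
  then show ?thesis
  proof cases
    case 3
    define k where "k = i - 2"
    have i: "i = Suc (Suc k)" using 3 by (simp add: k_def)
    have "lag_frame n x q t ! i = (map unit_vec [3..<n] @ [t]) ! k"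
      by (simp add: lag_frame_def i)
    also have "\<dots> = (if k < n - 3 then unit_vec (3 + k) else t)"
      using assms i by (simp add: nth_append)
    finally show ?thesis using i by (auto simp: numeral_eq_Suc)
  qed (simp_all add: lag_frame_def)
qed

lemma lspan_lag_frame_relation:
  assumes n: "n \<ge> 3" and ij: "i < 3 \<or> n \<le> i" "j < 3 \<or> n \<le> j"
    and "\<alpha> * x i = \<beta> * x j" "\<alpha> * q i = \<beta> * q j" "s \<le> n - 1 \<or> \<alpha> * t i = \<beta> * (t j :: 'a::field)"
    and v: "v \<in> lspan (take s (lag_frame n x q t))"
  shows "\<alpha> * v i = \<beta> * v j"
proof (rule lspan_linear_relation[OF _ v], rule ballI)
  fix w assume "w \<in> set (take s (lag_frame n x q t))"
  then have "w \<in> (if s \<le> n - 1 then {x, q} else {x, q, t}) \<union> unit_vec ` {3..<n}"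
    using set_take_lag_frame[OF n] by blast
  then show "\<alpha> * w i = \<beta> * w j"
    using assms(4-6) ij by (auto simp: unit_vec_def split: if_splits)
qed

lemma lspan_lag_frame_mid_dual_free:
  assumes n: "n \<ge> 3" and "mid_dual_free n x" "mid_dual_free n q" "mid_dual_free n t"
    and v: "v \<in> lspan (take s (lag_frame n x q t))"
  shows "mid_dual_free n v"
  unfolding mid_dual_free_def
proof (intro allI impI)
  fix k assume k: "n \<le> k \<and> k \<le> 2 * n - 4"
  have "1 * v k = 0 * v 0"
    by (rule lspan_lag_frame_relation[OF n _ _ _ _ _ v]) (use assms k in \<open>auto simp: mid_dual_free_def\<close>)
  then show "v k = 0" by simp
qed

lemma lag_frame_vecs:
  assumes "n \<ge> 3" and "x \<in> vecs n" "q \<in> vecs n" "t \<in> vecs n"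
  shows "set (lag_frame n x q t) \<subseteq> vecs n"
  using assms by (auto simp: set_lag_frame intro!: unit_vec_vecs)

lemma lag_frame_isotropic:
  assumes n: "n \<ge> 3" and core: "core_vec n x" "core_vec n q" "core_vec n t"
    and iso: "bform n x x = 0" "bform n x q = 0" "bform n x t = 0"
      "bform n q q = 0" "bform n q t = 0" "bform n t t = 0"
  shows "\<forall>u\<in>set (lag_frame n x q t). \<forall>v\<in>set (lag_frame n x q t). bform n u v = 0"
proof -
  have core_mid: "w (2 * n - 1 - k) = 0" if "w \<in> set (lag_frame n x q t)" "3 \<le> k" "k < n" for w k
  proof -
    have "w \<in> {x, q, t} \<or> (\<exists>k' < n. w = unit_vec k')" using that(1) by (auto simp: set_lag_frame)
    then show ?thesis using core that(2,3) n by (auto simp: core_vec_def unit_vec_def)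
  qed
  have mid: "bform n (unit_vec k) w = 0" "bform n w (unit_vec k) = 0"
    if "w \<in> set (lag_frame n x q t)" "3 \<le> k" "k < n" for w k
    using core_mid[OF that] that(3) bform_unit_vec_left[of k n w] bform_unit_vec_right[of k n w] by simp_all
  show ?thesis
  proof (intro ballI)
    fix u v assume u: "u \<in> set (lag_frame n x q t)" and v: "v \<in> set (lag_frame n x q t)"
    show "bform n u v = 0"
    proof (cases "u \<in> {x, q, t} \<and> v \<in> {x, q, t}")
      case True
      then show ?thesis using iso by (auto simp: bform_commute)
    next
      case False
      then show ?thesis using u v mid by (auto simp: set_lag_frame)
    qed
  qed
qed

lemma lag_frame_lin_indep:
  assumes n: "n \<ge> 3" and "core_vec n t"
    and piv: "kx \<in> {0, 1, 2, 2*n-3, 2*n-2, 2*n-1}" "kq \<in> {0, 1, 2, 2*n-3, 2*n-2, 2*n-1}"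
      "x kx \<noteq> 0" "q kq \<noteq> 0" "t kt \<noteq> 0" "q kx = 0" "t kx = 0" "t kq = 0"
  shows "lin_indep (lag_frame n x q t)"
proof -
  define piv where "piv i = (if i = 0 then kx else if i = 1 then kq else if i < n - 1 then i + 1 else kt)"
    for i
  have t_mid: "t k = 0" if "3 \<le> k" "k < n" for k
    using assms(2) that n unfolding core_vec_def by force
  show ?thesis
  proof (rule lin_indep_triangular[where piv = piv]; intro allI impI; unfold length_lag_frame[OF n])
    fix i assume "i < n"
    then show "(lag_frame n x q t ! i) (piv i) \<noteq> 0"
      using piv n by (auto simp: lag_frame_nth piv_def unit_vec_def)
  next
    fix i j assume "i < n" and j: "j < n" and ij: "i < j"
    consider "i < 2" | "2 \<le> i" "i < n - 1" using ij j by linarith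
    then show "(lag_frame n x q t ! j) (piv i) = 0"
    proof cases
      case 1
      then show ?thesis using ij j piv n by (auto simp: lag_frame_nth piv_def unit_vec_def)
    next
      case 2
      then show ?thesis using ij j t_mid[of "i + 1"] by (auto simp: lag_frame_nth piv_def unit_vec_def)
    qed
  qed
qed

lemma lag_frame_flag_in_flags:
  assumes n: "n \<ge> 3" and a: "admissible_seq n a"
    and core: "core_vec n x" "core_vec n q" "core_vec n t"
    and piv: "kx \<in> {0, 1, 2, 2*n-3, 2*n-2, 2*n-1}" "kq \<in> {0, 1, 2, 2*n-3, 2*n-2, 2*n-1}"
      "x kx \<noteq> 0" "q kq \<noteq> 0" "t kt \<noteq> 0" "q kx = 0" "t kx = 0" "t kq = 0"
    and iso: "bform n x x = 0" "bform n x q = 0" "bform n x t = 0"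
      "bform n q q = 0" "bform n q t = 0" "bform n t t = 0"
  shows "flag_of_basis (lag_frame n x q t) a \<in> flags n a"
proof (rule flag_of_basis_in_flags)
  show "set (lag_frame n x q t) \<subseteq> vecs n" using lag_frame_vecs core_vec_vecs n core by metis
  show "lin_indep (lag_frame n x q t)" using n core(3) piv by (rule lag_frame_lin_indep)
  show "\<forall>u\<in>set (lag_frame n x q t). \<forall>v\<in>set (lag_frame n x q t). bform n u v = 0"
    using lag_frame_isotropic[OF n core iso] .
  show "a \<noteq> []" "sum_list a \<le> length (lag_frame n x q t)"
    using a n by (simp_all add: admissible_seq_def length_lag_frame)
qed

section \<open>Three special frames\<close>

text \<open>Write \<open>e\<^sub>i\<close> for \<open>unit_vec i\<close> and \<open>f\<^sub>i = e\<^bsub>2n-1-i\<^esub>\<close> for its partner.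
  Modulo \<open>e\<^sub>3, \<dots>, e\<^bsub>n-1\<^esub>\<close>, the frames span the Lagrangians \<open>\<langle>e\<^sub>0, e\<^sub>1, f\<^sub>2\<rangle>\<close>,
  \<open>\<langle>e\<^sub>0, e\<^sub>2, f\<^sub>1\<rangle>\<close>, \<open>\<langle>e\<^sub>1, e\<^sub>2, f\<^sub>0\<rangle>\<close>, and begin with the lines \<open>e\<^sub>0 + l e\<^sub>1\<close>, \<open>e\<^sub>0 + e\<^sub>2\<close>,
  \<open>e\<^sub>1 + e\<^sub>2\<close> followed by \<open>f\<^sub>2\<close>, \<open>f\<^sub>1\<close>, \<open>f\<^sub>0\<close>.\<close>
definition line_gen1 :: "'a::field \<Rightarrow> nat \<Rightarrow> 'a" where
  "line_gen1 l = (\<lambda>i. if i = 0 then 1 else if i = 1 then l else 0)"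

definition line_gen2 :: "nat \<Rightarrow> 'a::field" where
  "line_gen2 = (\<lambda>i. if i = 0 \<or> i = 2 then 1 else 0)"

definition line_gen3 :: "nat \<Rightarrow> 'a::field" where
  "line_gen3 = (\<lambda>i. if i = 1 \<or> i = 2 then 1 else 0)"

definition frame1 :: "nat \<Rightarrow> 'a::field \<Rightarrow> (nat \<Rightarrow> 'a) list" where
  "frame1 n l = lag_frame n (line_gen1 l) (unit_vec (2*n-3)) (unit_vec 0)"

definition frame2 :: "nat \<Rightarrow> (nat \<Rightarrow> 'a::field) list" where
  "frame2 n = lag_frame n line_gen2 (unit_vec (2*n-2)) (unit_vec 0)"

definition frame3 :: "nat \<Rightarrow> (nat \<Rightarrow> 'a::field) list" where
  "frame3 n = lag_frame n line_gen3 (unit_vec (2*n-1)) (unit_vec 1)"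

lemma core_vec_line_gens: "core_vec n (line_gen1 l)" "core_vec n line_gen2" "core_vec n line_gen3"
  by (auto simp: core_vec_def line_gen1_def line_gen2_def line_gen3_def)

lemma line_gens_vecs:
  assumes "n \<ge> 3"
  shows "line_gen1 l \<in> vecs n" "line_gen2 \<in> vecs n" "line_gen3 \<in> vecs n"
  using core_vec_vecs[OF assms] core_vec_line_gens by blast+

lemma line_gens_nonzero:
  "line_gen1 l \<noteq> (\<lambda>i. 0)" "line_gen2 \<noteq> (\<lambda>i. 0)" "line_gen3 \<noteq> (\<lambda>i. 0)"
  by (auto simp: line_gen1_def line_gen2_def line_gen3_def fun_eq_iff)

lemma set_frames_vecs:
  assumes "n \<ge> 3"
  shows "set (frame1 n l) \<subseteq> vecs n" "set (frame2 n) \<subseteq> vecs n" "set (frame3 n) \<subseteq> vecs n"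
  unfolding frame1_def frame2_def frame3_def
  using assms by (intro lag_frame_vecs core_vec_vecs core_vec_line_gens core_vec_unit_vecs; simp)+

lemma take_1_frames:
  "take 1 (frame1 n l) = [line_gen1 l]" "take 1 (frame2 n) = [line_gen2]" "take 1 (frame3 n) = [line_gen3]"
  by (simp_all only: frame1_def frame2_def frame3_def take_1_lag_frame)

lemma frames_first:
  "1 \<le> s \<Longrightarrow> line_gen1 l \<in> lspan (take s (frame1 n l))"
  "1 \<le> s \<Longrightarrow> line_gen2 \<in> lspan (take s (frame2 n))"
  "1 \<le> s \<Longrightarrow> line_gen3 \<in> lspan (take s (frame3 n))"
  unfolding frame1_def frame2_def frame3_def by (simp_all add: lag_frame_first)

lemma frames_second:
  "2 \<le> s \<Longrightarrow> unit_vec (2*n-3) \<in> lspan (take s (frame1 n l))"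
  "2 \<le> s \<Longrightarrow> unit_vec (2*n-2) \<in> lspan (take s (frame2 n))"
  "2 \<le> s \<Longrightarrow> unit_vec (2*n-1) \<in> lspan (take s (frame3 n))"
  unfolding frame1_def frame2_def frame3_def by (simp_all add: lag_frame_second)

lemma frame1_flag_in_flags:
  assumes "n \<ge> 3" "admissible_seq n a" "l \<noteq> 0"
  shows "flag_of_basis (frame1 n l) a \<in> flags n a"
  unfolding frame1_def
  by (rule lag_frame_flag_in_flags[where kx = 1 and kq = "2*n-3" and kt = 0];
      use assms in \<open>(simp only: bform_core_vec core_vec_line_gens core_vec_unit_vecs)?;
        auto simp: line_gen1_def unit_vec_def core_vec_line_gens core_vec_unit_vecs\<close>)

lemma frame2_flag_in_flags:
  assumes "n \<ge> 3" "admissible_seq n a"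
  shows "flag_of_basis (frame2 n) a \<in> flags n a"
  unfolding frame2_def
  by (rule lag_frame_flag_in_flags[where kx = 2 and kq = "2*n-2" and kt = 0];
      use assms in \<open>(simp only: bform_core_vec core_vec_line_gens core_vec_unit_vecs)?;
        auto simp: line_gen2_def unit_vec_def core_vec_line_gens core_vec_unit_vecs\<close>)

lemma frame3_flag_in_flags:
  assumes "n \<ge> 3" "admissible_seq n a"
  shows "flag_of_basis (frame3 n) a \<in> flags n a"
  unfolding frame3_def
  by (rule lag_frame_flag_in_flags[where kx = 2 and kq = "2*n-1" and kt = 1];
      use assms in \<open>(simp only: bform_core_vec core_vec_line_gens core_vec_unit_vecs)?;
        auto simp: line_gen3_def unit_vec_def core_vec_line_gens core_vec_unit_vecs\<close>)

lemma frame1_coords: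
  assumes n: "n \<ge> 3" and v: "v \<in> lspan (take s (frame1 n l))"
  shows "v 2 = 0" "v (2*n-2) = 0" "v (2*n-1) = 0" "mid_dual_free n v"
    and "s \<le> n - 1 \<Longrightarrow> v 1 = l * v 0"
proof -
  note rel = lspan_lag_frame_relation[OF n _ _ _ _ _ v[unfolded frame1_def]]
  have "1 * v 2 = 0 * v 0" "1 * v (2*n-2) = 0 * v 0" "1 * v (2*n-1) = 0 * v 0"
    by (rule rel; use n in \<open>auto simp: line_gen1_def unit_vec_def\<close>)+
  then show "v 2 = 0" "v (2*n-2) = 0" "v (2*n-1) = 0" by simp_all
  show "mid_dual_free n v"
    using lspan_lag_frame_mid_dual_free[OF n _ _ _ v[unfolded frame1_def]]
      core_vec_mid_dual_free[OF n] core_vec_line_gens core_vec_unit_vecs by blast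
  show "v 1 = l * v 0" if "s \<le> n - 1"
  proof -
    have "1 * v 1 = l * v 0" by (rule rel) (use n that in \<open>auto simp: line_gen1_def unit_vec_def\<close>)
    then show ?thesis by simp
  qed
qed

lemma frame2_coords:
  assumes n: "n \<ge> 3" and v: "v \<in> lspan (take s (frame2 n))"
  shows "v 1 = 0" "v (2*n-3) = 0" "v (2*n-1) = 0" "mid_dual_free n v"
    and "s \<le> n - 1 \<Longrightarrow> v 2 = v 0"
proof -
  note rel = lspan_lag_frame_relation[OF n _ _ _ _ _ v[unfolded frame2_def]]
  have "1 * v 1 = 0 * v 0" "1 * v (2*n-3) = 0 * v 0" "1 * v (2*n-1) = 0 * v 0"
    by (rule rel; use n in \<open>auto simp: line_gen2_def unit_vec_def\<close>)+
  then show "v 1 = 0" "v (2*n-3) = 0" "v (2*n-1) = 0" by simp_all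
  show "mid_dual_free n v"
    using lspan_lag_frame_mid_dual_free[OF n _ _ _ v[unfolded frame2_def]]
      core_vec_mid_dual_free[OF n] core_vec_line_gens core_vec_unit_vecs by blast
  show "v 2 = v 0" if "s \<le> n - 1"
  proof -
    have "1 * v 2 = 1 * v 0" by (rule rel) (use n that in \<open>auto simp: line_gen2_def unit_vec_def\<close>)
    then show ?thesis by simp
  qed
qed

lemma frame3_coords:
  assumes n: "n \<ge> 3" and v: "v \<in> lspan (take s (frame3 n))"
  shows "v 0 = 0" "v (2*n-3) = 0" "v (2*n-2) = 0" "mid_dual_free n v"
    and "s \<le> n - 1 \<Longrightarrow> v 2 = v 1"
proof -
  note rel = lspan_lag_frame_relation[OF n _ _ _ _ _ v[unfolded frame3_def]]
  have "1 * v 0 = 0 * v 1" "1 * v (2*n-3) = 0 * v 0" "1 * v (2*n-2) = 0 * v 0"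
    by (rule rel; use n in \<open>auto simp: line_gen3_def unit_vec_def\<close>)+
  then show "v 0 = 0" "v (2*n-3) = 0" "v (2*n-2) = 0" by simp_all
  show "mid_dual_free n v"
    using lspan_lag_frame_mid_dual_free[OF n _ _ _ v[unfolded frame3_def]]
      core_vec_mid_dual_free[OF n] core_vec_line_gens core_vec_unit_vecs by blast
  show "v 2 = v 1" if "s \<le> n - 1"
  proof -
    have "1 * v 2 = 1 * v 1" by (rule rel) (use n that in \<open>auto simp: line_gen3_def unit_vec_def\<close>)
    then show ?thesis by simp
  qed
qed

lemma bform_frame_generators:
  assumes n: "n \<ge> 3"
  shows "bform n (line_gen1 l) line_gen2 = 0" "bform n (line_gen1 l) (unit_vec (2*n-2)) = l"
    "bform n (unit_vec (2*n-3)) line_gen2 = 1" "bform n (unit_vec (2*n-3)) (unit_vec (2*n-2)) = 0"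
    "bform n (line_gen1 l) line_gen3 = 0" "bform n (line_gen1 l) (unit_vec (2*n-1)) = 1"
    "bform n (unit_vec (2*n-3)) line_gen3 = 1" "bform n (unit_vec (2*n-3)) (unit_vec (2*n-1)) = 0"
    "bform n line_gen2 line_gen3 = 0" "bform n line_gen2 (unit_vec (2*n-1)) = 1"
    "bform n (unit_vec (2*n-2)) line_gen3 = 1" "bform n (unit_vec (2*n-2)) (unit_vec (2*n-1)) = 0"
  by (simp_all only: bform_core_vec[OF n] core_vec_line_gens core_vec_unit_vecs)
    (use n in \<open>auto simp: line_gen1_def line_gen2_def line_gen3_def unit_vec_def\<close>)

lemma frame1_lagrangian:
  assumes n: "n \<ge> 3" and l: "l \<noteq> 0"
  shows "unit_vec 0 \<in> lspan (take n (frame1 n l))" "unit_vec 1 \<in> lspan (take n (frame1 n l))"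
proof -
  show e0: "unit_vec 0 \<in> lspan (take n (frame1 n l))"
    unfolding frame1_def using lag_frame_last[OF n] .
  have "unit_vec 1 = vscale (1 / l) (vadd (line_gen1 l) (vscale (-1) (unit_vec 0)))"
    using l by (auto simp: vadd_def vscale_def unit_vec_def line_gen1_def)
  moreover have "line_gen1 l \<in> lspan (take n (frame1 n l))"
    unfolding frame1_def by (rule lag_frame_first) (use n in simp)
  ultimately show "unit_vec 1 \<in> lspan (take n (frame1 n l))"
    using e0 by (simp add: lspan_vscale lspan_vadd)
qed

lemma frame2_lagrangian:
  assumes n: "n \<ge> 3"
  shows "unit_vec 0 \<in> lspan (take n (frame2 n :: (nat \<Rightarrow> 'a::field) list))"
    and "unit_vec 2 \<in> lspan (take n (frame2 n :: (nat \<Rightarrow> 'a) list))"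
proof -
  show e0: "unit_vec 0 \<in> lspan (take n (frame2 n))"
    unfolding frame2_def using lag_frame_last[OF n] .
  have "(line_gen2 :: nat \<Rightarrow> 'a) \<in> lspan (take n (frame2 n))"
    unfolding frame2_def by (rule lag_frame_first) (use n in simp)
  then have "vadd (line_gen2 :: nat \<Rightarrow> 'a) (vscale (-1) (unit_vec 0)) \<in> lspan (take n (frame2 n))"
    using e0 by (intro lspan_vadd lspan_vscale)
  moreover have "vadd (line_gen2 :: nat \<Rightarrow> 'a) (vscale (-1) (unit_vec 0)) = unit_vec 2"
    by (auto simp: vadd_def vscale_def unit_vec_def line_gen2_def)
  ultimately show "unit_vec 2 \<in> lspan (take n (frame2 n :: (nat \<Rightarrow> 'a) list))" by (simp only:)
qed

lemma frame3_lagrangian: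
  assumes n: "n \<ge> 3"
  shows "unit_vec 1 \<in> lspan (take n (frame3 n :: (nat \<Rightarrow> 'a::field) list))"
    and "unit_vec 2 \<in> lspan (take n (frame3 n :: (nat \<Rightarrow> 'a) list))"
proof -
  show e1: "unit_vec 1 \<in> lspan (take n (frame3 n))"
    unfolding frame3_def using lag_frame_last[OF n] .
  have "(line_gen3 :: nat \<Rightarrow> 'a) \<in> lspan (take n (frame3 n))"
    unfolding frame3_def by (rule lag_frame_first) (use n in simp)
  then have "vadd (line_gen3 :: nat \<Rightarrow> 'a) (vscale (-1) (unit_vec 1)) \<in> lspan (take n (frame3 n))"
    using e1 by (intro lspan_vadd lspan_vscale)
  moreover have "vadd (line_gen3 :: nat \<Rightarrow> 'a) (vscale (-1) (unit_vec 1)) = unit_vec 2"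
    by (auto simp: vadd_def vscale_def unit_vec_def line_gen3_def)
  ultimately show "unit_vec 2 \<in> lspan (take n (frame3 n :: (nat \<Rightarrow> 'a) list))" by (simp only:)
qed

section \<open>Isometries between frame triples\<close>

lemma invertible_2x2_cancel:
  fixes a b e f p q r t :: "'a::field"
  assumes "q * r - p * t \<noteq> 0" "a * q + b * p = e * q + f * p" "a * t + b * r = e * t + f * r"
  shows "a = e" "b = f"
proof -
  have "(a - e) * (q * r - p * t) = ((a*q + b*p) - (e*q + f*p)) * r - ((a*t + b*r) - (e*t + f*r)) * p"
    "(b - f) * (q * r - p * t) = ((a*t + b*r) - (e*t + f*r)) * q - ((a*q + b*p) - (e*q + f*p)) * t"
    by algebra+
  then show "a = e" "b = f" using assms by simp_all
qed

text \<open>The unknowns are the plane coordinates of the images of the first two vectors of the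
  three frames: \<open>(a, b), (c, d)\<close> in plane 1, \<open>(e, f), (g, h)\<close> in plane 2, \<open>(q, p), (t, r)\<close> in
  plane 3. The pairings with plane 3 force the coordinate matrices on planes 1 and 2 to agree;
  the pairing between planes 1 and 2 then leaves only \<open>l = m\<close> or \<open>l m = 1\<close>.\<close>
lemma gram_equations_imp_eq_or_inverse:
  fixes a b c d e f g h p q r t l m :: "'a::field"
  assumes e1: "m*a*f + b*e = 0" and e2: "m*a*h + b*g = l" and e3: "m*c*f + d*e = 1" and e4: "m*c*h + d*g = 0"
    and e5: "a*q + b*p = 0" and e6: "a*t + b*r = 1" and e7: "c*q + d*p = 1" and e8: "c*t + d*r = 0"
    and e9: "e*q + f*p = 0" and e10: "e*t + f*r = 1" and e11: "g*q + h*p = 1" and e12: "g*t + h*r = 0"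
  shows "l = m \<or> l * m = 1"
proof -
  have "(a*d - b*c) * (q*r - p*t) = (a*q + b*p) * (c*t + d*r) - (a*t + b*r) * (c*q + d*p)" by algebra
  then have det: "q*r - p*t \<noteq> 0" using e5 e6 e7 e8 by auto
  have ae: "a = e" and bf: "b = f" using invertible_2x2_cancel[OF det, of a b e f] e5 e6 e9 e10 by simp_all
  have cg: "c = g" and dh: "d = h" using invertible_2x2_cancel[OF det, of c d g h] e7 e8 e11 e12 by simp_all
  have f1: "a*b*(m+1) = 0" using e1 ae bf by (simp add: algebra_simps)
  have f2: "m*a*d + b*c = l" using e2 cg dh by simp
  have f3: "m*c*b + d*a = 1" using e3 ae bf by (simp add: algebra_simps)
  show ?thesis
  proof (cases "m + 1 = 0")
    case True
    then have "m = -1" by (simp add: eq_neg_iff_add_eq_0)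
    then show ?thesis using f2 f3 by (simp add: algebra_simps)
  next
    case False
    then have "a = 0 \<or> b = 0" using f1 by simp
    then show ?thesis
    proof
      assume "a = 0"
      then have "b*c = l" "b*(c*m) = 1" using f2 f3 by (simp_all add: algebra_simps)
      then show ?thesis by (metis mult.assoc)
    next
      assume "b = 0"
      then have "a*(d*m) = l" "a*d = 1" using f2 f3 by (simp_all add: algebra_simps)
      then show ?thesis by (metis mult.assoc mult_1)
    qed
  qed
qed

lemma orth_group_bform_planes12:
  assumes n: "n \<ge> 3" and g: "g \<in> orth_group n"
    and P1: "g ` lspan (take s1 (frame1 n l)) = lspan (take s1 (frame1 n m))" "s1 \<le> n - 1"
    and P2: "g ` lspan (take s2 (frame2 n)) = lspan (take s2 (frame2 n))" "s2 \<le> n - 1"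
    and u: "u \<in> lspan (take s1 (frame1 n l))" and v: "v \<in> lspan (take s2 (frame2 n))"
  shows "m * g u 0 * g v (2*n-2) + g u (2*n-3) * g v 0 = bform n u v"
proof -
  have "u \<in> vecs n" "v \<in> vecs n"
    using u v lspan_take_subset_vecs set_frames_vecs[OF n] by blast+
  then have "bform n u v = bform n (g u) (g v)" by (simp add: orth_group_bform[OF g])
  moreover have gu: "g u \<in> lspan (take s1 (frame1 n m))" and gv: "g v \<in> lspan (take s2 (frame2 n))"
    using P1(1) P2(1) u v by blast+
  ultimately show ?thesis
    using frame1_coords[OF n gu] frame2_coords[OF n gv] P1(2) P2(2) by (simp add: bform_mid_dual_free[OF n])
qed

lemma orth_group_bform_planes13:
  assumes n: "n \<ge> 3" and g: "g \<in> orth_group n"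
    and P1: "g ` lspan (take s1 (frame1 n l)) = lspan (take s1 (frame1 n m))" "s1 \<le> n - 1"
    and P3: "g ` lspan (take s3 (frame3 n)) = lspan (take s3 (frame3 n))" "s3 \<le> n - 1"
    and u: "u \<in> lspan (take s1 (frame1 n l))" and v: "v \<in> lspan (take s3 (frame3 n))"
  shows "g u 0 * g v (2*n-1) + g u (2*n-3) * g v 1 = bform n u v"
proof -
  have "u \<in> vecs n" "v \<in> vecs n"
    using u v lspan_take_subset_vecs set_frames_vecs[OF n] by blast+
  then have "bform n u v = bform n (g u) (g v)" by (simp add: orth_group_bform[OF g])
  moreover have gu: "g u \<in> lspan (take s1 (frame1 n m))" and gv: "g v \<in> lspan (take s3 (frame3 n))"
    using P1(1) P3(1) u v by blast+
  ultimately show ?thesis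
    using frame1_coords[OF n gu] frame3_coords[OF n gv] P1(2) P3(2) by (simp add: bform_mid_dual_free[OF n])
qed

lemma orth_group_bform_planes23:
  assumes n: "n \<ge> 3" and g: "g \<in> orth_group n"
    and P2: "g ` lspan (take s2 (frame2 n)) = lspan (take s2 (frame2 n))" "s2 \<le> n - 1"
    and P3: "g ` lspan (take s3 (frame3 n)) = lspan (take s3 (frame3 n))" "s3 \<le> n - 1"
    and u: "u \<in> lspan (take s2 (frame2 n))" and v: "v \<in> lspan (take s3 (frame3 n))"
  shows "g u 0 * g v (2*n-1) + g u (2*n-2) * g v 1 = bform n u v"
proof -
  have "u \<in> vecs n" "v \<in> vecs n"
    using u v lspan_take_subset_vecs set_frames_vecs[OF n] by blast+
  then have "bform n u v = bform n (g u) (g v)" by (simp add: orth_group_bform[OF g])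
  moreover have gu: "g u \<in> lspan (take s2 (frame2 n))" and gv: "g v \<in> lspan (take s3 (frame3 n))"
    using P2(1) P3(1) u v by blast+
  ultimately show ?thesis
    using frame2_coords[OF n gu] frame3_coords[OF n gv] P2(2) P3(2) by (simp add: bform_mid_dual_free[OF n])
qed

lemma param_eq_or_inverse_if_moves_planes:
  fixes l m :: "'a::field"
  assumes n: "n \<ge> 3" and g: "g \<in> orth_group n"
    and "moves_mid_span n g (frame1 n l) (frame1 n m)"
      "moves_mid_span n g (frame2 n) (frame2 n)"
      "moves_mid_span n g (frame3 n) (frame3 n)"
  shows "l = m \<or> l * m = 1"
proof -
  obtain s1 where P1: "g ` lspan (take s1 (frame1 n l)) = lspan (take s1 (frame1 n m))" "2 \<le> s1" "s1 \<le> n - 1"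
    using assms(3) unfolding moves_mid_span_def by blast
  obtain s2 where P2: "g ` lspan (take s2 (frame2 n)) = lspan (take s2 (frame2 n))" "2 \<le> s2" "s2 \<le> n - 1"
    using assms(4) unfolding moves_mid_span_def by blast
  obtain s3 where P3: "g ` lspan (take s3 (frame3 n)) = lspan (take s3 (frame3 n))" "2 \<le> s3" "s3 \<le> n - 1"
    using assms(5) unfolding moves_mid_span_def by blast
  let ?x1 = "line_gen1 l" and ?x2 = "line_gen2" and ?x3 = "line_gen3"
    and ?f0 = "unit_vec (2*n-1)" and ?f1 = "unit_vec (2*n-2)" and ?f2 = "unit_vec (2*n-3)"
  have x1: "?x1 \<in> lspan (take s1 (frame1 n l))" "?f2 \<in> lspan (take s1 (frame1 n l))"
    by (rule frames_first(1), use P1(2) in simp, rule frames_second(1)[OF P1(2)])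
  have x2: "?x2 \<in> lspan (take s2 (frame2 n))" "?f1 \<in> lspan (take s2 (frame2 n))"
    by (rule frames_first(2), use P2(2) in simp, rule frames_second(2)[OF P2(2)])
  have x3: "?x3 \<in> lspan (take s3 (frame3 n))" "?f0 \<in> lspan (take s3 (frame3 n))"
    by (rule frames_first(3), use P3(2) in simp, rule frames_second(3)[OF P3(2)])
  note G12 = orth_group_bform_planes12[OF n g P1(1,3) P2(1,3)]
    and G13 = orth_group_bform_planes13[OF n g P1(1,3) P3(1,3)]
    and G23 = orth_group_bform_planes23[OF n g P2(1,3) P3(1,3)]
  have "m * g ?x1 0 * g ?x2 (2*n-2) + g ?x1 (2*n-3) * g ?x2 0 = 0"
    "m * g ?x1 0 * g ?f1 (2*n-2) + g ?x1 (2*n-3) * g ?f1 0 = l"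
    "m * g ?f2 0 * g ?x2 (2*n-2) + g ?f2 (2*n-3) * g ?x2 0 = 1"
    "m * g ?f2 0 * g ?f1 (2*n-2) + g ?f2 (2*n-3) * g ?f1 0 = 0"
    "g ?x1 0 * g ?x3 (2*n-1) + g ?x1 (2*n-3) * g ?x3 1 = 0"
    "g ?x1 0 * g ?f0 (2*n-1) + g ?x1 (2*n-3) * g ?f0 1 = 1"
    "g ?f2 0 * g ?x3 (2*n-1) + g ?f2 (2*n-3) * g ?x3 1 = 1"
    "g ?f2 0 * g ?f0 (2*n-1) + g ?f2 (2*n-3) * g ?f0 1 = 0"
    "g ?x2 0 * g ?x3 (2*n-1) + g ?x2 (2*n-2) * g ?x3 1 = 0"
    "g ?x2 0 * g ?f0 (2*n-1) + g ?x2 (2*n-2) * g ?f0 1 = 1"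
    "g ?f1 0 * g ?x3 (2*n-1) + g ?f1 (2*n-2) * g ?x3 1 = 1"
    "g ?f1 0 * g ?f0 (2*n-1) + g ?f1 (2*n-2) * g ?f0 1 = 0"
    using G12[OF x1(1) x2(1)] G12[OF x1(1) x2(2)] G12[OF x1(2) x2(1)] G12[OF x1(2) x2(2)]
      G13[OF x1(1) x3(1)] G13[OF x1(1) x3(2)] G13[OF x1(2) x3(1)] G13[OF x1(2) x3(2)]
      G23[OF x2(1) x3(1)] G23[OF x2(1) x3(2)] G23[OF x2(2) x3(1)] G23[OF x2(2) x3(2)]
    by (simp_all add: bform_frame_generators[OF n, simplified])
  then show ?thesis by (rule gram_equations_imp_eq_or_inverse)
qed

lemma param_eq_if_moves_lagrangian1:
  fixes l m :: "'a::field"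
  assumes n: "n \<ge> 3" and g: "g \<in> orth_group n" and l: "l \<noteq> 0"
    and P2: "g ` lspan (take s2 (frame2 n)) = lspan (take s2 (frame2 n))" "2 \<le> s2"
    and P3: "g ` lspan (take s3 (frame3 n)) = lspan (take s3 (frame3 n))" "2 \<le> s3"
    and X2: "g line_gen2 1 = 0" "g line_gen2 2 = g line_gen2 0"
    and X3: "g line_gen3 0 = 0" "g line_gen3 2 = g line_gen3 1"
    and L1: "moves_line_lagrangian n g (frame1 n l) (frame1 n m)"
  shows "l = m"
proof -
  have V: "line_gen1 l \<in> vecs n" "line_gen2 \<in> vecs n" "line_gen3 \<in> vecs n"
    "unit_vec 0 \<in> vecs n" "unit_vec 1 \<in> vecs n"
    using n line_gens_vecs[OF n] by (auto intro!: unit_vec_vecs)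
  have "g ` lspan [line_gen1 l] = lspan [line_gen1 m]"
    using L1[unfolded moves_line_lagrangian_def, THEN conjunct1] unfolding take_1_frames .
  then obtain k where k: "k \<noteq> 0" "g (line_gen1 l) = (\<lambda>i. k * line_gen1 m i)"
    using orth_group_maps_line[OF g _ V(1) line_gens_nonzero(1)] by blast
  have "g (unit_vec 0) \<in> lspan (take n (frame1 n m))" "g (unit_vec 1) \<in> lspan (take n (frame1 n m))"
    using frame1_lagrangian[OF n l] L1[unfolded moves_line_lagrangian_def, THEN conjunct2] by blast+
  then have e0_2: "g (unit_vec 0) 2 = 0" and e1_2: "g (unit_vec 1) 2 = 0"
    using frame1_coords(1)[OF n] by blast+
  have e0_1: "g (unit_vec 0) 1 = 0"
    by (rule orth_group_unit_vec_perp[where j' = "2*n-1", OF g set_frames_vecs(2)[OF n] _ _ P2(1)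
          _ frames_second(2)[OF P2(2)]])
      (use n frame2_coords(3)[OF n] in auto)
  have e1_0: "g (unit_vec 1) 0 = 0"
    by (rule orth_group_unit_vec_perp[where j' = "2*n-2", OF g set_frames_vecs(3)[OF n] _ _ P3(1)
          _ frames_second(3)[OF P3(2)]])
      (use n frame3_coords(3)[OF n] in auto)
  have "1 * g (line_gen1 l) i + 0 * g (line_gen1 l) i = 1 * g (unit_vec 0) i + l * g (unit_vec 1) i" for i
    by (rule orth_group_relation[OF g V(1,1,4,5)]) (auto simp: line_gen1_def unit_vec_def)
  from this[of 0] this[of 1]
  have r1: "k = g (unit_vec 0) 0 + l * g (unit_vec 1) 0" "k * m = g (unit_vec 0) 1 + l * g (unit_vec 1) 1"
    using k(2) by (simp_all add: line_gen1_def)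
  have "1 * g line_gen2 i + 1 * g (unit_vec 1) i = 1 * g line_gen3 i + 1 * g (unit_vec 0) i" for i
    by (rule orth_group_relation[OF g V(2,5,3,4)]) (auto simp: line_gen2_def line_gen3_def unit_vec_def)
  from this[of 0] this[of 1] this[of 2]
  have "m * k = l * k" using r1 X2 X3 e0_1 e1_0 e0_2 e1_2 by (simp add: algebra_simps)
  then show "l = m" using k(1) by simp
qed

lemma param_eq_if_moves_lagrangian2:
  fixes l m :: "'a::field"
  assumes n: "n \<ge> 3" and g: "g \<in> orth_group n" and l: "l \<noteq> 0"
    and P1: "g ` lspan (take s1 (frame1 n l)) = lspan (take s1 (frame1 n m))" "2 \<le> s1"
    and P3: "g ` lspan (take s3 (frame3 n)) = lspan (take s3 (frame3 n))" "2 \<le> s3"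
    and X1: "g (line_gen1 l) 1 = m * g (line_gen1 l) 0" "g (line_gen1 l) 2 = 0"
    and X3: "g line_gen3 0 = 0" "g line_gen3 2 = g line_gen3 1"
    and L2: "moves_line_lagrangian n g (frame2 n) (frame2 n)"
  shows "l = m"
proof -
  have V: "line_gen1 l \<in> vecs n" "line_gen2 \<in> vecs n" "line_gen3 \<in> vecs n"
    "unit_vec 0 \<in> vecs n" "unit_vec 2 \<in> vecs n"
    using n line_gens_vecs[OF n] by (auto intro!: unit_vec_vecs)
  have "g ` lspan [line_gen2] = lspan [line_gen2]"
    using L2[unfolded moves_line_lagrangian_def, THEN conjunct1] unfolding take_1_frames .
  then obtain k where k: "k \<noteq> 0" "g line_gen2 = (\<lambda>i. k * line_gen2 i)"
    using orth_group_maps_line[OF g _ V(2) line_gens_nonzero(2)] by blast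
  have "g (unit_vec 0) \<in> lspan (take n (frame2 n))" "g (unit_vec 2) \<in> lspan (take n (frame2 n))"
    using frame2_lagrangian[OF n] L2[unfolded moves_line_lagrangian_def, THEN conjunct2] by blast+
  then have e0_1: "g (unit_vec 0) 1 = 0" and e2_1: "g (unit_vec 2) 1 = 0"
    using frame2_coords(1)[OF n] by blast+
  have e0_2: "g (unit_vec 0) 2 = 0"
    by (rule orth_group_unit_vec_perp[where j' = "2*n-1", OF g set_frames_vecs(1)[OF n] _ _ P1(1)
          _ frames_second(1)[OF P1(2)]])
      (use n frame1_coords(3)[OF n] in auto)
  have e2_0: "g (unit_vec 2) 0 = 0"
    by (rule orth_group_unit_vec_perp[where j' = "2*n-3", OF g set_frames_vecs(3)[OF n] _ _ P3(1)
          _ frames_second(3)[OF P3(2)]])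
      (use n frame3_coords(2)[OF n] in auto)
  have "1 * g line_gen2 i + 0 * g line_gen2 i = 1 * g (unit_vec 0) i + 1 * g (unit_vec 2) i" for i
    by (rule orth_group_relation[OF g V(2,2,4,5)]) (auto simp: line_gen2_def unit_vec_def)
  from this[of 0] this[of 2]
  have r1: "k = g (unit_vec 0) 0 + g (unit_vec 2) 0" "k = g (unit_vec 0) 2 + g (unit_vec 2) 2"
    using k(2) by (simp_all add: line_gen2_def)
  have "l * g line_gen3 i + 1 * g (unit_vec 0) i = 1 * g (line_gen1 l) i + l * g (unit_vec 2) i" for i
    by (rule orth_group_relation[OF g V(3,4,1,5)]) (auto simp: line_gen1_def line_gen3_def unit_vec_def)
  from this[of 0] this[of 1] this[of 2]
  have "l * k = m * k" using r1 l X1 X3 e0_1 e2_1 e0_2 e2_0 by (simp add: algebra_simps)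
  then show "l = m" using k(1) by simp
qed

lemma param_eq_if_moves_lagrangian3:
  fixes l m :: "'a::field"
  assumes n: "n \<ge> 3" and g: "g \<in> orth_group n"
    and P1: "g ` lspan (take s1 (frame1 n l)) = lspan (take s1 (frame1 n m))" "2 \<le> s1"
    and P2: "g ` lspan (take s2 (frame2 n)) = lspan (take s2 (frame2 n))" "2 \<le> s2"
    and X1: "g (line_gen1 l) 1 = m * g (line_gen1 l) 0" "g (line_gen1 l) 2 = 0"
    and X2: "g line_gen2 1 = 0" "g line_gen2 2 = g line_gen2 0"
    and L3: "moves_line_lagrangian n g (frame3 n) (frame3 n)"
  shows "l = m"
proof -
  have V: "line_gen1 l \<in> vecs n" "line_gen2 \<in> vecs n" "line_gen3 \<in> vecs n"
    "unit_vec 1 \<in> vecs n" "unit_vec 2 \<in> vecs n"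
    using n line_gens_vecs[OF n] by (auto intro!: unit_vec_vecs)
  have "g ` lspan [line_gen3] = lspan [line_gen3]"
    using L3[unfolded moves_line_lagrangian_def, THEN conjunct1] unfolding take_1_frames .
  then obtain k where k: "k \<noteq> 0" "g line_gen3 = (\<lambda>i. k * line_gen3 i)"
    using orth_group_maps_line[OF g _ V(3) line_gens_nonzero(3)] by blast
  have "g (unit_vec 1) \<in> lspan (take n (frame3 n))" "g (unit_vec 2) \<in> lspan (take n (frame3 n))"
    using frame3_lagrangian[OF n] L3[unfolded moves_line_lagrangian_def, THEN conjunct2] by blast+
  then have e1_0: "g (unit_vec 1) 0 = 0" and e2_0: "g (unit_vec 2) 0 = 0"
    using frame3_coords(1)[OF n] by blast+
  have e1_2: "g (unit_vec 1) 2 = 0"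
    by (rule orth_group_unit_vec_perp[where j' = "2*n-2", OF g set_frames_vecs(1)[OF n] _ _ P1(1)
          _ frames_second(1)[OF P1(2)]])
      (use n frame1_coords(2)[OF n] in auto)
  have e2_1: "g (unit_vec 2) 1 = 0"
    by (rule orth_group_unit_vec_perp[where j' = "2*n-3", OF g set_frames_vecs(2)[OF n] _ _ P2(1)
          _ frames_second(2)[OF P2(2)]])
      (use n frame2_coords(2)[OF n] in auto)
  have "1 * g line_gen3 i + 0 * g line_gen3 i = 1 * g (unit_vec 1) i + 1 * g (unit_vec 2) i" for i
    by (rule orth_group_relation[OF g V(3,3,4,5)]) (auto simp: line_gen3_def unit_vec_def)
  from this[of 1] this[of 2]
  have r1: "k = g (unit_vec 1) 1 + g (unit_vec 2) 1" "k = g (unit_vec 1) 2 + g (unit_vec 2) 2"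
    using k(2) by (simp_all add: line_gen3_def)
  have "1 * g (line_gen1 l) i + 1 * g (unit_vec 2) i = 1 * g line_gen2 i + l * g (unit_vec 1) i" for i
    by (rule orth_group_relation[OF g V(1,5,2,4)]) (auto simp: line_gen1_def line_gen2_def unit_vec_def)
  from this[of 0] this[of 1] this[of 2]
  have "m * k = l * k" using r1 X1 X2 e1_0 e2_0 e1_2 e2_1 by (simp add: algebra_simps)
  then show "l = m" using k(1) by simp
qed

lemma moves_frame_flag_line_gen1:
  assumes n: "n \<ge> 3" and "moves_frame_flag n g (frame1 n l) (frame1 n m)"
  shows "g (line_gen1 l) 1 = m * g (line_gen1 l) 0" "g (line_gen1 l) 2 = 0"
proof -
  obtain t where "t \<le> n - 1" "g (line_gen1 l) \<in> lspan (take t (frame1 n m))"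
    by (rule moves_frame_flag_line[OF assms(2) n frames_first(1)[OF order_refl]])
  then show "g (line_gen1 l) 1 = m * g (line_gen1 l) 0" "g (line_gen1 l) 2 = 0"
    using frame1_coords(5)[OF n] frame1_coords(1)[OF n] by blast+
qed

lemma moves_frame_flag_line_gen2:
  assumes n: "n \<ge> 3" and "moves_frame_flag n g (frame2 n) (frame2 n)"
  shows "g line_gen2 1 = 0" "g line_gen2 2 = g line_gen2 0"
proof -
  obtain t where "t \<le> n - 1" "g line_gen2 \<in> lspan (take t (frame2 n))"
    by (rule moves_frame_flag_line[OF assms(2) n frames_first(2)[OF order_refl]])
  then show "g line_gen2 1 = 0" "g line_gen2 2 = g line_gen2 0"
    using frame2_coords(1)[OF n] frame2_coords(5)[OF n] by blast+
qed

lemma moves_frame_flag_line_gen3: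
  assumes n: "n \<ge> 3" and "moves_frame_flag n g (frame3 n) (frame3 n)"
  shows "g line_gen3 0 = 0" "g line_gen3 2 = g line_gen3 1"
proof -
  obtain t where "t \<le> n - 1" "g line_gen3 \<in> lspan (take t (frame3 n))"
    by (rule moves_frame_flag_line[OF assms(2) n frames_first(3)[OF order_refl]])
  then show "g line_gen3 0 = 0" "g line_gen3 2 = g line_gen3 1"
    using frame3_coords(1)[OF n] frame3_coords(5)[OF n] by blast+
qed

lemma param_eq_or_inverse_if_moves_frames:
  fixes l m :: "'a::field"
  assumes n: "n \<ge> 3" and g: "g \<in> orth_group n" and l: "l \<noteq> 0"
    and M1: "moves_frame_flag n g (frame1 n l) (frame1 n m)"
    and M2: "moves_frame_flag n g (frame2 n) (frame2 n)"
    and M3: "moves_frame_flag n g (frame3 n) (frame3 n)"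
  shows "l = m \<or> l * m = 1"
proof -
  obtain s1 where P1: "g ` lspan (take s1 (frame1 n l)) = lspan (take s1 (frame1 n m))" "2 \<le> s1"
    using moves_frame_flag_plane[OF M1 n] .
  obtain s2 where P2: "g ` lspan (take s2 (frame2 n)) = lspan (take s2 (frame2 n))" "2 \<le> s2"
    using moves_frame_flag_plane[OF M2 n] .
  obtain s3 where P3: "g ` lspan (take s3 (frame3 n)) = lspan (take s3 (frame3 n))" "2 \<le> s3"
    using moves_frame_flag_plane[OF M3 n] .
  note X1 = moves_frame_flag_line_gen1[OF n M1]
    and X2 = moves_frame_flag_line_gen2[OF n M2]
    and X3 = moves_frame_flag_line_gen3[OF n M3]
  consider "moves_line_lagrangian n g (frame1 n l) (frame1 n m)"
    | "moves_line_lagrangian n g (frame2 n) (frame2 n)"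
    | "moves_line_lagrangian n g (frame3 n) (frame3 n)"
    | "moves_mid_span n g (frame1 n l) (frame1 n m)" "moves_mid_span n g (frame2 n) (frame2 n)"
      "moves_mid_span n g (frame3 n) (frame3 n)"
    using M1 M2 M3 that unfolding moves_frame_flag_def by meson
  then show ?thesis
  proof cases
    case 1
    then have "l = m" by (rule param_eq_if_moves_lagrangian1[OF n g l P2 P3 X2 X3])
    then show ?thesis ..
  next
    case 2
    then have "l = m" by (rule param_eq_if_moves_lagrangian2[OF n g l P1 P3 X1 X3])
    then show ?thesis ..
  next
    case 3
    then have "l = m" by (rule param_eq_if_moves_lagrangian3[OF n g P1 P2 X1 X2])
    then show ?thesis ..
  next
    case 4
    then show ?thesis by (rule param_eq_or_inverse_if_moves_planes[OF n g])
  qed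
qed

section \<open>Infinitely many orbits\<close>

lemma finite_if_finite_fibres:
  assumes "finite (f ` A)" and "\<And>x. x \<in> A \<Longrightarrow> finite {y \<in> A. f y = f x}"
  shows "finite A"
proof (rule finite_subset)
  show "A \<subseteq> (\<Union>z\<in>f ` A. {y \<in> A. f y = z})" by auto
  show "finite (\<Union>z\<in>f ` A. {y \<in> A. f y = z})"
    by (rule finite_UN_I) (use assms in auto)
qed

definition frame_triple :: "nat \<Rightarrow> nat list \<Rightarrow> nat list \<Rightarrow> nat list \<Rightarrow> 'a::field \<Rightarrow>
    (nat \<Rightarrow> 'a) set list \<times> (nat \<Rightarrow> 'a) set list \<times> (nat \<Rightarrow> 'a) set list" where
  "frame_triple n a b c l =
     (flag_of_basis (frame1 n l) a, flag_of_basis (frame2 n) b, flag_of_basis (frame3 n) c)"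

lemma frame_triple_in_triple_space:
  assumes "n \<ge> 3" "admissible_seq n a" "admissible_seq n b" "admissible_seq n c" "l \<noteq> 0"
  shows "frame_triple n a b c l \<in> triple_space n a b c"
  using assms
  by (simp add: frame_triple_def triple_space_def frame1_flag_in_flags frame2_flag_in_flags
      frame3_flag_in_flags)

lemma frame_triple_orbit_eq:
  assumes n: "n \<ge> 3"
    and a: "admissible_seq n a" "a \<noteq> [1]" "a \<noteq> [n]"
    and b: "admissible_seq n b" "b \<noteq> [1]" "b \<noteq> [n]"
    and c: "admissible_seq n c" "c \<noteq> [1]" "c \<noteq> [n]"
    and l: "l \<noteq> 0"
    and orbit: "triple_orbit n (frame_triple n a b c l) = triple_orbit n (frame_triple n a b c m)"
  shows "m = l \<or> m = inverse l"
proof -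
  obtain g where g: "g \<in> orth_group n"
    and "act_flag g (flag_of_basis (frame1 n l) a) = flag_of_basis (frame1 n m) a"
      "act_flag g (flag_of_basis (frame2 n) b) = flag_of_basis (frame2 n) b"
      "act_flag g (flag_of_basis (frame3 n) c) = flag_of_basis (frame3 n) c"
    using triple_orbit_eqD[OF orbit[unfolded frame_triple_def]] .
  then have "l = m \<or> l * m = 1"
    using param_eq_or_inverse_if_moves_frames[OF n g l] moves_frame_flag_if_act_flag[OF _ _ _ n]
      a b c by blast
  then show ?thesis using l by (auto simp: field_simps)
qed

theorem proposition1p3:
  fixes n :: nat and a b c :: "nat list"
  assumes "infinite (UNIV :: 'a::field set)"
    and "(2::'a) \<noteq> 0"
    and "n \<ge> 3"
    and "admissible_seq n a" and "admissible_seq n b" and "admissible_seq n c"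
    and "finitely_many_orbits TYPE('a) n a b c"
  shows "a = [1] \<or> a = [n] \<or> b = [1] \<or> b = [n] \<or> c = [1] \<or> c = [n]"
proof (rule ccontr)
  assume "\<not> ?thesis"
  then have types: "a \<noteq> [1]" "a \<noteq> [n]" "b \<noteq> [1]" "b \<noteq> [n]" "c \<noteq> [1]" "c \<noteq> [n]" by auto
  let ?S = "{l :: 'a. l \<noteq> 0}" and ?orbit = "\<lambda>l::'a. triple_orbit n (frame_triple n a b c l)"
  have "?orbit ` ?S \<subseteq> triple_orbit n ` triple_space n a b c"
    using frame_triple_in_triple_space assms(3-6) by blast
  then have "finite (?orbit ` ?S)"
    using assms(7) finite_subset unfolding finitely_many_orbits_def by blast
  moreover have "finite {m \<in> ?S. ?orbit m = ?orbit l}" if "l \<in> ?S" for l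
  proof (rule finite_subset)
    show "{m \<in> ?S. ?orbit m = ?orbit l} \<subseteq> {l, inverse l}"
      using frame_triple_orbit_eq[OF assms(3,4) types(1,2) assms(5) types(3,4) assms(6) types(5,6)] that
      by auto
  qed simp
  ultimately have "finite ?S" by (rule finite_if_finite_fibres)
  then have "finite (insert 0 ?S)" by simp
  moreover have "insert 0 ?S = UNIV" by auto
  ultimately show False using assms(1) by simp
qed

end
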